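(* Consider the multiobjective problem (MOP) $$\min_{(\bar{\mathbf z},\mathbf s)}\ \begin{pmatrix}g(\bar{\mathbf z})\\ h(\mathbf s)\end{pmatrix}\quad\text{subject to }(\bar{\mathbf z},\mathbf s)\in\mathbb S\text{ and }\exists\,(\mathbf z_1^\top,\dots,\mathbf z_{\mathcal I}^\top)^\top\in\mathbb D\text{ with }\bar{\mathbf z}=\tfrac1{\mathcal I}\textstyle\sum_{i=1}^{\mathcal I}\mathbf z_i,$$ and, for $\kappa\in[0,1]$, its weighted-sum scalarization of minimizing $\kappa g(\bar{\mathbf z})+(1-\kappa)h(\mathbf s)$ over the same feasible set. All efficient points of (MOP), except for the extremal points (those obtained from the scalarization with $\kappa\in\{0,1\}$), are properly efficient in the sense of Geoffrion.
   Context: Setting (a network of $\mathcal I\in\mathbb N$ residential energy systems with batteries). Fix an integer horizon $N\ge 2$, a time $k\in\mathbb N_0$, a step length $T>0$, and write $[m:n]=\{m,\dots,n\}$. For each $i\in[1:\mathcal I]$ the following are given: constants $\alpha_i,\beta_i,\gamma_i\in(0,1]$, a capacity $C_i\ge0$, bounds $\underline u_i<0<\bar u_i$, an initial state $x_i(k)\in[0,C_i]$, and data $w_i(n)\in\mathbb R$ for $n\in[k:k+N-1]$. Let $\mathbb U_i$ be the set of $(u^-,u^+)\in\mathbb R^2$ with $\underline u_i\le u^-\le0$, $0\le u^+\le\bar u_i$ and $0\le u^-/\underline u_i+u^+/\bar u_i\le1$. Let $\mathbb D_i\subset\mathbb R^N$ be the set of $\mathbf z_i=(z_i(k),\dots,z_i(k+N-1))^\top$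 for which there exist $(u_i^-(n),u_i^+(n))\in\mathbb U_i$, $n\in[k:k+N-1]$, with $x_i(n+1)=\alpha_i x_i(n)+T(\beta_iu_i^+(n)+u_i^-(n))\in[0,C_i]$ and $z_i(n)=w_i(n)+u_i^+(n)+\gamma_iu_i^-(n)$ for all $n\in[k:k+N-1]$; let $\mathbb D=\mathbb D_1\times\dots\times\mathbb D_{\mathcal I}$. A reference vector $\bar\zeta\in\mathbb R^N$ and tube bounds $\underline{\mathbf c},\bar{\mathbf c}\in\mathbb R^N$ are given, and $$\mathbb S=\Big\{(\bar{\mathbf z},\mathbf s)\in\mathbb R^N\times\mathbb R^{2N}_{\ge0}:\ \begin{pmatrix}I\\-I\end{pmatrix}\bar{\mathbf z}-\mathbf s\le\begin{pmatrix}\bar{\mathbf c}\\-\underline{\mathbf c}\end{pmatrix}\Big\}.$$ Objectives: $g(\bar{\mathbf z})=\frac1N\|\bar{\mathbf z}-\bar\zeta\|_2^2$, $h(\mathbf s)=\|\mathbf s\|_2^2$. For a vector problem $\min_{x\in\mathcal M}f(x)$, $f=(f_1,\dots,f_m)$: a feasible $x^\star$ is efficient if for all feasible $x$ and all $i$, $f_i(x)<f_i(x^\star)$ implies $f_j(x^\star)<f_j(x)$ for some $j$. It is properly efficient in the sense of Geoffrion if it is efficient and there exists $L>0$ such that for all $i$ and all feasible $x$ with $f_i(x)<f_i(x^\star)$ there exists $j$ with $f_j(x^\star)<f_j(x)$ and $\frac{f_i(x^\star)-f_i(x)}{f_j(x)-f_j(x^\star)}\le L$. *)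

theory Defs
  imports Complex_Main
begin

text \<open>Vectors in R^N are functions nat => real with relevant indices j < N;
  index j corresponds to time k + j. Vectors in R^(2N) use indices j < 2N.\<close>

definition Uset :: "real \<Rightarrow> real \<Rightarrow> (real \<times> real) set" where
  "Uset ulo uhi = {(um, up). ulo \<le> um \<and> um \<le> 0 \<and> 0 \<le> up \<and> up \<le> uhi
      \<and> 0 \<le> um / ulo + up / uhi \<and> um / ulo + up / uhi \<le> 1}"

text \<open>The set D_i. x j stands for x_i(k+j), um j / up j for u_i^-(k+j) / u_i^+(k+j),
  z j for z_i(k+j); w is the data indexed by absolute time.\<close>
definition Dset :: "nat \<Rightarrow> nat \<Rightarrow> real \<Rightarrow> real \<Rightarrow> real \<Rightarrow> real \<Rightarrow> real \<Rightarrow> real \<Rightarrow> real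
    \<Rightarrow> real \<Rightarrow> (nat \<Rightarrow> real) \<Rightarrow> (nat \<Rightarrow> real) set" where
  "Dset N k T alpha beta gamma C ulo uhi x0 w =
    {z. \<exists>um up x. x 0 = x0 \<and>
       (\<forall>j<N. (um j, up j) \<in> Uset ulo uhi
          \<and> x (Suc j) = alpha * x j + T * (beta * up j + um j)
          \<and> 0 \<le> x (Suc j) \<and> x (Suc j) \<le> C
          \<and> z j = w (k + j) + up j + gamma * um j)}"

definition Sset :: "nat \<Rightarrow> (nat \<Rightarrow> real) \<Rightarrow> (nat \<Rightarrow> real) \<Rightarrow> ((nat \<Rightarrow> real) \<times> (nat \<Rightarrow> real)) set" where
  "Sset N clo chi = {(zb, s). (\<forall>j<2*N. 0 \<le> s j) \<and>
      (\<forall>j<N. zb j - s j \<le> chi j \<and> - zb j - s (N + j) \<le> - clo j)}"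

definition gobj :: "nat \<Rightarrow> (nat \<Rightarrow> real) \<Rightarrow> (nat \<Rightarrow> real) \<Rightarrow> real" where
  "gobj N zeta zb = (1 / real N) * (\<Sum>j<N. (zb j - zeta j)^2)"

definition hobj :: "nat \<Rightarrow> (nat \<Rightarrow> real) \<Rightarrow> real" where
  "hobj N s = (\<Sum>j<2*N. (s j)^2)"

definition MOP_feas :: "nat \<Rightarrow> nat \<Rightarrow> nat \<Rightarrow> real
   \<Rightarrow> (nat \<Rightarrow> real) \<Rightarrow> (nat \<Rightarrow> real) \<Rightarrow> (nat \<Rightarrow> real) \<Rightarrow> (nat \<Rightarrow> real)
   \<Rightarrow> (nat \<Rightarrow> real) \<Rightarrow> (nat \<Rightarrow> real) \<Rightarrow> (nat \<Rightarrow> real) \<Rightarrow> (nat \<Rightarrow> nat \<Rightarrow> real)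
   \<Rightarrow> (nat \<Rightarrow> real) \<Rightarrow> (nat \<Rightarrow> real)
   \<Rightarrow> ((nat \<Rightarrow> real) \<times> (nat \<Rightarrow> real)) set" where
  "MOP_feas I N k T alpha beta gamma C ulo uhi x0 w clo chi =
    {(zb, s). (zb, s) \<in> Sset N clo chi \<and>
       (\<exists>zs :: nat \<Rightarrow> nat \<Rightarrow> real.
          (\<forall>i\<in>{1..I}. zs i \<in> Dset N k T (alpha i) (beta i) (gamma i) (C i) (ulo i) (uhi i) (x0 i) (w i))
        \<and> (\<forall>j<N. zb j = (1 / real I) * (\<Sum>i=1..I. zs i j)))}"

definition efficient :: "'a set \<Rightarrow> (nat \<Rightarrow> 'a \<Rightarrow> real) \<Rightarrow> nat \<Rightarrow> 'a \<Rightarrow> bool" where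
  "efficient M f m xs \<longleftrightarrow> xs \<in> M \<and>
     (\<forall>x\<in>M. \<forall>i<m. f i x < f i xs \<longrightarrow> (\<exists>j<m. f j xs < f j x))"

definition geoffrion_properly_efficient :: "'a set \<Rightarrow> (nat \<Rightarrow> 'a \<Rightarrow> real) \<Rightarrow> nat \<Rightarrow> 'a \<Rightarrow> bool" where
  "geoffrion_properly_efficient M f m xs \<longleftrightarrow> efficient M f m xs \<and>
     (\<exists>L>0. \<forall>i<m. \<forall>x\<in>M. f i x < f i xs \<longrightarrow>
        (\<exists>j<m. f j xs < f j x \<and> (f i xs - f i x) / (f j x - f j xs) \<le> L))"

definition MOP_obj :: "nat \<Rightarrow> (nat \<Rightarrow> real) \<Rightarrow> nat \<Rightarrow> ((nat \<Rightarrow> real) \<times> (nat \<Rightarrow> real)) \<Rightarrow> real" where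
  "MOP_obj N zeta i p = (if i = 0 then gobj N zeta (fst p) else hobj N (snd p))"

definition scal_min :: "((nat \<Rightarrow> real) \<times> (nat \<Rightarrow> real)) set \<Rightarrow> nat \<Rightarrow> (nat \<Rightarrow> real) \<Rightarrow> real
    \<Rightarrow> ((nat \<Rightarrow> real) \<times> (nat \<Rightarrow> real)) \<Rightarrow> bool" where
  "scal_min M N zeta kappa p \<longleftrightarrow> p \<in> M \<and>
     (\<forall>q\<in>M. kappa * gobj N zeta (fst p) + (1 - kappa) * hobj N (snd p)
            \<le> kappa * gobj N zeta (fst q) + (1 - kappa) * hobj N (snd q))"

end

theory Submission
  imports Defs
begin

text \<open>Every mixture of two feasible points is dominated by a feasible point, since the feasible
  set and both objectives are convex. Let p be efficient and let x beat p in g at the cost of h. As p does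
  not minimize h, some feasible r has h r < h p; mixing x and r with the weight that brings the
  bound on h back exactly to h p gives a point that, by efficiency, cannot beat p in g. This bounds
  the trade-off at x by the slope between p and r; symmetrically with a point beating p in g.\<close>

text \<open>Convex-likeness in the sense of Ky Fan: the image of M under (f, g), enlarged by the
  nonnegative quadrant, is convex.\<close>
definition convexlike_on :: "'a set \<Rightarrow> ('a \<Rightarrow> real) \<Rightarrow> ('a \<Rightarrow> real) \<Rightarrow> bool" where
  "convexlike_on M f g \<longleftrightarrow> (\<forall>x\<in>M. \<forall>y\<in>M. \<forall>t. 0 \<le> t \<and> t \<le> 1 \<longrightarrow>
     (\<exists>z\<in>M. f z \<le> t * f x + (1 - t) * f y \<and> g z \<le> t * g x + (1 - t) * g y))"

lemma convexlike_onD: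
  assumes "convexlike_on M f g" "x \<in> M" "y \<in> M" "0 \<le> t" "t \<le> 1"
  obtains z where "z \<in> M" "f z \<le> t * f x + (1 - t) * f y" "g z \<le> t * g x + (1 - t) * g y"
  using assms unfolding convexlike_on_def by blast

lemma convexlike_on_commute: "convexlike_on M f g \<longleftrightarrow> convexlike_on M g f"
  unfolding convexlike_on_def by blast

lemma convexlike_on_tradeoff_le:
  assumes cvx: "convexlike_on M f g"
    and eff: "\<forall>y\<in>M. f y < f p \<longrightarrow> g p < g y"
    and r: "r \<in> M" "g r < g p"
    and x: "x \<in> M" "g p < g x"
  shows "(f p - f x) / (g x - g p) \<le> (f r - f p) / (g p - g r)"
proof -
  define B where "B = g x - g p"
  define D where "D = g p - g r"
  have "B > 0" "D > 0" using r x by (simp_all add: B_def D_def)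
  define t where "t = D / (B + D)"
  have t: "0 \<le> t" "t \<le> 1" "1 - t = B / (B + D)"
    using \<open>B > 0\<close> \<open>D > 0\<close> by (simp_all add: t_def field_simps)
  obtain z where z: "z \<in> M" "f z \<le> t * f x + (1 - t) * f r" "g z \<le> t * g x + (1 - t) * g r"
    using convexlike_onD[OF cvx x(1) r(1) t(1,2)] .
  have "t * (B + D) = D"
    using \<open>B > 0\<close> \<open>D > 0\<close> by (simp add: t_def)
  then have "t * g x + (1 - t) * g r = g p"
    by (simp add: B_def D_def algebra_simps)
  then have "f p \<le> f z" using eff z by force
  also have "\<dots> \<le> t * f x + (1 - t) * f r" by (fact z(2))
  also have "\<dots> = (D * f x + B * f r) / (B + D)"
    unfolding t(3) by (simp add: t_def add_divide_distrib)
  finally have "D * (f p - f x) \<le> B * (f r - f p)"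
    using \<open>B > 0\<close> \<open>D > 0\<close> by (simp add: le_divide_eq algebra_simps)
  then show ?thesis
    unfolding B_def [symmetric] D_def [symmetric]
    using \<open>B > 0\<close> \<open>D > 0\<close> by (simp add: divide_simps mult.commute)
qed

lemma ex_less_2: "(\<exists>j<2::nat. P j) \<longleftrightarrow> P 0 \<or> P 1"
  by (auto simp: less_2_cases_iff)

lemma all_less_2: "(\<forall>j<2::nat. P j) \<longleftrightarrow> P 0 \<and> P 1"
  by (auto simp: less_2_cases_iff)

lemma efficient_2D:
  assumes "efficient M f 2 p" "x \<in> M"
  shows "f 0 x < f 0 p \<Longrightarrow> f 1 p < f 1 x" and "f 1 x < f 1 p \<Longrightarrow> f 0 p < f 0 x"
  using assms unfolding efficient_def all_less_2 ex_less_2 by auto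

lemma geoffrion_properly_efficient_2I:
  assumes eff: "efficient M f 2 p" and "L > 0"
    and "\<And>x. x \<in> M \<Longrightarrow> f 0 x < f 0 p \<Longrightarrow> (f 0 p - f 0 x) / (f 1 x - f 1 p) \<le> L"
    and "\<And>x. x \<in> M \<Longrightarrow> f 1 x < f 1 p \<Longrightarrow> (f 1 p - f 1 x) / (f 0 x - f 0 p) \<le> L"
  shows "geoffrion_properly_efficient M f 2 p"
  unfolding geoffrion_properly_efficient_def all_less_2 ex_less_2
  using assms efficient_2D[OF eff] by blast

theorem convexlike_on_properly_efficient:
  assumes cvx: "convexlike_on M (f 0) (f 1)" and eff: "efficient M f 2 p"
    and q: "q \<in> M" "f 0 q < f 0 p"
    and r: "r \<in> M" "f 1 r < f 1 p"
  shows "geoffrion_properly_efficient M f 2 p"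
proof -
  define L where "L = max ((f 0 r - f 0 p) / (f 1 p - f 1 r)) ((f 1 q - f 1 p) / (f 0 p - f 0 q))"
  have eff0: "\<forall>y\<in>M. f 0 y < f 0 p \<longrightarrow> f 1 p < f 1 y"
    and eff1: "\<forall>y\<in>M. f 1 y < f 1 p \<longrightarrow> f 0 p < f 0 y"
    using efficient_2D[OF eff] by blast+
  have cvx': "convexlike_on M (f 1) (f 0)" using cvx convexlike_on_commute by blast
  have "f 0 p < f 0 r" "f 1 p < f 1 q" using eff0 eff1 q r by blast+
  with q r have "L > 0" by (simp add: L_def less_max_iff_disj)
  moreover have "(f 0 p - f 0 x) / (f 1 x - f 1 p) \<le> L" if "x \<in> M" "f 0 x < f 0 p" for x
  proof -
    have "f 1 p < f 1 x" using efficient_2D(1)[OF eff that] .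
    then have "(f 0 p - f 0 x) / (f 1 x - f 1 p) \<le> (f 0 r - f 0 p) / (f 1 p - f 1 r)"
      by (rule convexlike_on_tradeoff_le[OF cvx eff0 r \<open>x \<in> M\<close>])
    then show ?thesis unfolding L_def by (simp add: le_max_iff_disj)
  qed
  moreover have "(f 1 p - f 1 x) / (f 0 x - f 0 p) \<le> L" if "x \<in> M" "f 1 x < f 1 p" for x
  proof -
    have "f 0 p < f 0 x" using efficient_2D(2)[OF eff that] .
    then have "(f 1 p - f 1 x) / (f 0 x - f 0 p) \<le> (f 1 q - f 1 p) / (f 0 p - f 0 q)"
      by (rule convexlike_on_tradeoff_le[OF cvx' eff1 q \<open>x \<in> M\<close>])
    then show ?thesis unfolding L_def by (simp add: le_max_iff_disj)
  qed
  ultimately show ?thesis by (rule geoffrion_properly_efficient_2I[OF eff])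
qed

lemma convex_comb_le: "0 \<le> t \<Longrightarrow> t \<le> 1 \<Longrightarrow> x \<le> c \<Longrightarrow> y \<le> c \<Longrightarrow> t * x + (1 - t) * y \<le> c"
  for t x y c :: real
  by (rule convex_bound_le) auto

lemma convex_comb_ge: "0 \<le> t \<Longrightarrow> t \<le> 1 \<Longrightarrow> c \<le> x \<Longrightarrow> c \<le> y \<Longrightarrow> c \<le> t * x + (1 - t) * y"
  for t x y c :: real
  using convex_comb_le[of t "- x" "- c" "- y"] by simp

lemma power2_diff_convex_comb:
  fixes t a b c :: real
  assumes "0 \<le> t" "t \<le> 1"
  shows "(t * a + (1 - t) * b - c)\<^sup>2 \<le> t * (a - c)\<^sup>2 + (1 - t) * (b - c)\<^sup>2"
proof -
  have "t * (a - c)\<^sup>2 + (1 - t) * (b - c)\<^sup>2 - (t * a + (1 - t) * b - c)\<^sup>2 = t * (1 - t) * (a - b)\<^sup>2"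
    by (simp add: power2_eq_square algebra_simps)
  moreover have "t * (1 - t) * (a - b)\<^sup>2 \<ge> 0" using assms by simp
  ultimately show ?thesis by linarith
qed

lemma sum_power2_diff_convex_comb:
  fixes t :: real and a b c :: "'a \<Rightarrow> real"
  assumes "0 \<le> t" "t \<le> 1"
  shows "(\<Sum>j\<in>A. (t * a j + (1 - t) * b j - c j)\<^sup>2)
    \<le> t * (\<Sum>j\<in>A. (a j - c j)\<^sup>2) + (1 - t) * (\<Sum>j\<in>A. (b j - c j)\<^sup>2)"
  using sum_mono[OF power2_diff_convex_comb[OF assms]]
  by (simp add: sum.distrib sum_distrib_left)

lemma gobj_convex_comb:
  "0 \<le> t \<Longrightarrow> t \<le> 1 \<Longrightarrow>
    gobj N zeta (\<lambda>j. t * a j + (1 - t) * b j) \<le> t * gobj N zeta a + (1 - t) * gobj N zeta b"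
  using mult_left_mono[OF sum_power2_diff_convex_comb[where A="{..<N}" and a=a and b=b and c=zeta],
      of t "1 / real N"]
  by (simp add: gobj_def diff_divide_distrib algebra_simps)

lemma hobj_convex_comb:
  "0 \<le> t \<Longrightarrow> t \<le> 1 \<Longrightarrow>
    hobj N (\<lambda>j. t * a j + (1 - t) * b j) \<le> t * hobj N a + (1 - t) * hobj N b"
  using sum_power2_diff_convex_comb[where A="{..<2*N}" and a=a and b=b and c="\<lambda>_. 0"]
  by (simp add: hobj_def)

lemma Uset_convex:
  assumes "(a1, b1) \<in> Uset lo hi" "(a2, b2) \<in> Uset lo hi" "0 \<le> t" "t \<le> 1"
  shows "(t * a1 + (1 - t) * a2, t * b1 + (1 - t) * b2) \<in> Uset lo hi"
proof -
  have "(t * a1 + (1 - t) * a2) / lo + (t * b1 + (1 - t) * b2) / hi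
      = t * (a1 / lo + b1 / hi) + (1 - t) * (a2 / lo + b2 / hi)"
    unfolding divide_inverse by (simp add: algebra_simps)
  with assms show ?thesis
    unfolding Uset_def by (simp add: convex_comb_le convex_comb_ge)
qed

lemma Dset_convex:
  assumes "z1 \<in> Dset N k T alpha beta gamma C ulo uhi x0 w"
    and "z2 \<in> Dset N k T alpha beta gamma C ulo uhi x0 w"
    and t: "0 \<le> t" "t \<le> 1"
  shows "(\<lambda>j. t * z1 j + (1 - t) * z2 j) \<in> Dset N k T alpha beta gamma C ulo uhi x0 w"
proof -
  obtain um1 up1 x1 where "x1 0 = x0" and traj1: "\<forall>j<N. (um1 j, up1 j) \<in> Uset ulo uhi
      \<and> x1 (Suc j) = alpha * x1 j + T * (beta * up1 j + um1 j)
      \<and> 0 \<le> x1 (Suc j) \<and> x1 (Suc j) \<le> C \<and> z1 j = w (k + j) + up1 j + gamma * um1 j"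
    using assms(1) unfolding Dset_def by blast
  obtain um2 up2 x2 where "x2 0 = x0" and traj2: "\<forall>j<N. (um2 j, up2 j) \<in> Uset ulo uhi
      \<and> x2 (Suc j) = alpha * x2 j + T * (beta * up2 j + um2 j)
      \<and> 0 \<le> x2 (Suc j) \<and> x2 (Suc j) \<le> C \<and> z2 j = w (k + j) + up2 j + gamma * um2 j"
    using assms(2) unfolding Dset_def by blast
  define um where "um j = t * um1 j + (1 - t) * um2 j" for j
  define up where "up j = t * up1 j + (1 - t) * up2 j" for j
  define x where "x j = t * x1 j + (1 - t) * x2 j" for j
  have "x 0 = x0" using \<open>x1 0 = x0\<close> \<open>x2 0 = x0\<close> by (simp add: x_def algebra_simps)
  moreover have "(um j, up j) \<in> Uset ulo uhi
      \<and> x (Suc j) = alpha * x j + T * (beta * up j + um j)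
      \<and> 0 \<le> x (Suc j) \<and> x (Suc j) \<le> C
      \<and> t * z1 j + (1 - t) * z2 j = w (k + j) + up j + gamma * um j" if "j < N" for j
  proof -
    note step1 = traj1[rule_format, OF that] and step2 = traj2[rule_format, OF that]
    have "x (Suc j) = t * x1 (Suc j) + (1 - t) * x2 (Suc j)" by (simp add: x_def)
    with step1 step2 have "0 \<le> x (Suc j) \<and> x (Suc j) \<le> C"
      using convex_comb_le[OF t] convex_comb_ge[OF t] by simp
    moreover have "(um j, up j) \<in> Uset ulo uhi"
      unfolding um_def up_def using step1 step2 by (simp add: Uset_convex[OF _ _ t])
    ultimately show ?thesis
      using step1 step2 by (simp add: um_def up_def x_def algebra_simps)
  qed
  ultimately show ?thesis unfolding Dset_def by blast
qed

lemma Sset_convex: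
  assumes "(zb1, s1) \<in> Sset N clo chi" "(zb2, s2) \<in> Sset N clo chi"
    and t: "0 \<le> t" "t \<le> 1"
  shows "(\<lambda>j. t * zb1 j + (1 - t) * zb2 j, \<lambda>j. t * s1 j + (1 - t) * s2 j) \<in> Sset N clo chi"
proof -
  have "t * zb1 j + (1 - t) * zb2 j - (t * s1 j + (1 - t) * s2 j)
      = t * (zb1 j - s1 j) + (1 - t) * (zb2 j - s2 j)"
    and "- (t * zb1 j + (1 - t) * zb2 j) - (t * s1 (N + j) + (1 - t) * s2 (N + j))
      = t * (- zb1 j - s1 (N + j)) + (1 - t) * (- zb2 j - s2 (N + j))" for j
    by (simp_all add: algebra_simps)
  with assms show ?thesis
    unfolding Sset_def by (simp add: convex_comb_le[OF t] convex_comb_ge[OF t])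
qed

lemma MOP_feas_convex:
  assumes "(zb1, s1) \<in> MOP_feas I N k T alpha beta gamma C ulo uhi x0 w clo chi"
    and "(zb2, s2) \<in> MOP_feas I N k T alpha beta gamma C ulo uhi x0 w clo chi"
    and t: "0 \<le> t" "t \<le> 1"
  shows "(\<lambda>j. t * zb1 j + (1 - t) * zb2 j, \<lambda>j. t * s1 j + (1 - t) * s2 j)
    \<in> MOP_feas I N k T alpha beta gamma C ulo uhi x0 w clo chi"
proof -
  let ?D = "\<lambda>i. Dset N k T (alpha i) (beta i) (gamma i) (C i) (ulo i) (uhi i) (x0 i) (w i)"
  obtain zs1 where zs1: "\<forall>i\<in>{1..I}. zs1 i \<in> ?D i"
    "\<forall>j<N. zb1 j = 1 / real I * (\<Sum>i=1..I. zs1 i j)"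
    using assms(1) unfolding MOP_feas_def by blast
  obtain zs2 where zs2: "\<forall>i\<in>{1..I}. zs2 i \<in> ?D i"
    "\<forall>j<N. zb2 j = 1 / real I * (\<Sum>i=1..I. zs2 i j)"
    using assms(2) unfolding MOP_feas_def by blast
  define zs where "zs i j = t * zs1 i j + (1 - t) * zs2 i j" for i j
  have "\<forall>i\<in>{1..I}. zs i \<in> ?D i"
    using zs1(1) zs2(1) Dset_convex[OF _ _ t] unfolding zs_def by blast
  moreover have "t * zb1 j + (1 - t) * zb2 j = 1 / real I * (\<Sum>i=1..I. zs i j)" if "j < N" for j
  proof -
    have sum_zs: "(\<Sum>i=1..I. zs i j) = t * (\<Sum>i=1..I. zs1 i j) + (1 - t) * (\<Sum>i=1..I. zs2 i j)"
      by (simp add: zs_def sum.distrib sum_distrib_left)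
    show ?thesis
      unfolding sum_zs using zs1(2) zs2(2) that
      by (simp add: algebra_simps add_divide_distrib diff_divide_distrib)
  qed
  moreover have "(\<lambda>j. t * zb1 j + (1 - t) * zb2 j, \<lambda>j. t * s1 j + (1 - t) * s2 j) \<in> Sset N clo chi"
    using assms(1,2) Sset_convex[OF _ _ t] unfolding MOP_feas_def by blast
  ultimately show ?thesis unfolding MOP_feas_def by blast
qed

lemma MOP_feas_convexlike:
  "convexlike_on (MOP_feas I N k T alpha beta gamma C ulo uhi x0 w clo chi)
    (MOP_obj N zeta 0) (MOP_obj N zeta 1)"
proof -
  let ?M = "MOP_feas I N k T alpha beta gamma C ulo uhi x0 w clo chi"
  have "\<exists>z\<in>?M. gobj N zeta (fst z) \<le> t * gobj N zeta zb1 + (1 - t) * gobj N zeta zb2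
      \<and> hobj N (snd z) \<le> t * hobj N s1 + (1 - t) * hobj N s2"
    if "(zb1, s1) \<in> ?M" "(zb2, s2) \<in> ?M" "0 \<le> t" "t \<le> 1" for zb1 s1 zb2 s2 t
    by (intro bexI[OF _ MOP_feas_convex[OF that]])
      (simp add: gobj_convex_comb hobj_convex_comb that(3,4))
  then show ?thesis
    unfolding convexlike_on_def MOP_obj_def by (simp add: Ball_def split_paired_All)
qed

theorem corollary3:
  fixes I N k :: nat and T :: real
    and alpha beta gamma C ulo uhi x0 :: "nat \<Rightarrow> real"
    and w :: "nat \<Rightarrow> nat \<Rightarrow> real"
    and zeta clo chi :: "nat \<Rightarrow> real"
    and p :: "(nat \<Rightarrow> real) \<times> (nat \<Rightarrow> real)"
  assumes "I \<ge> 1" and "N \<ge> 2" and "T > 0"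
    and "\<forall>i\<in>{1..I}. 0 < alpha i \<and> alpha i \<le> 1"
    and "\<forall>i\<in>{1..I}. 0 < beta i \<and> beta i \<le> 1"
    and "\<forall>i\<in>{1..I}. 0 < gamma i \<and> gamma i \<le> 1"
    and "\<forall>i\<in>{1..I}. C i \<ge> 0"
    and "\<forall>i\<in>{1..I}. ulo i < 0 \<and> 0 < uhi i"
    and "\<forall>i\<in>{1..I}. 0 \<le> x0 i \<and> x0 i \<le> C i"
    and eff: "efficient (MOP_feas I N k T alpha beta gamma C ulo uhi x0 w clo chi)
                (MOP_obj N zeta) 2 p"
    and not0: "\<not> scal_min (MOP_feas I N k T alpha beta gamma C ulo uhi x0 w clo chi) N zeta 0 p"
    and not1: "\<not> scal_min (MOP_feas I N k T alpha beta gamma C ulo uhi x0 w clo chi) N zeta 1 p"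
  shows "geoffrion_properly_efficient (MOP_feas I N k T alpha beta gamma C ulo uhi x0 w clo chi)
           (MOP_obj N zeta) 2 p"
proof -
  let ?M = "MOP_feas I N k T alpha beta gamma C ulo uhi x0 w clo chi"
  have "p \<in> ?M" using eff by (simp add: efficient_def)
  then obtain q r where "q \<in> ?M" "MOP_obj N zeta 0 q < MOP_obj N zeta 0 p"
    and "r \<in> ?M" "MOP_obj N zeta 1 r < MOP_obj N zeta 1 p"
    using not0 not1 by (force simp: scal_min_def MOP_obj_def)
  then show ?thesis
    by (rule convexlike_on_properly_efficient[OF MOP_feas_convexlike eff])
qed

end
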